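(* Let $\rho>0$, $A>0$, $R>0$, $J>0$, $C_f>0$ be constants, let $a'<0$ be a constant, let $\beta\in[\beta_{\min},\beta_{\max}]$ and $V_w>0$ be constants, and let $C_p:(0,\infty)\times[\beta_{\min},\beta_{\max}]\to\mathbb{R}$ satisfy: (A1) $C_p(\lambda,\beta)$ is continuously differentiable in both $\lambda$ and $\beta$ on $(0,\infty)\times[\beta_{\min},\beta_{\max}]$; (A2) there exists $c\in(0,\infty)$ with $C_p(\lambda,\beta)\le c\lambda$ for all $\lambda\in(0,\infty)$, $\beta\in[\beta_{\min},\beta_{\max}]$; (A3) for each fixed $\beta\in[\beta_{\min},\beta_{\max}]$ there exists $\lambda_1\in(0,\infty)$ with $C_p(\lambda,\beta)>0$ for all $\lambda\in(0,\lambda_1)$; (A4) there exist $\underline{c}\in(-\infty,0)$ and $\overline{c}\in(0,\infty)$ with $\underline{c}\le\frac{\partial}{\partial\lambda}\big(\frac{C_p(\lambda,\beta)}{\lambda}\big)\le\overline{c}$ for all $\lambda\in(0,\infty)$, $\beta\in[\beta_{\min},\beta_{\max}]$. Define, for $\omega_r>0$, $$g(\omega_r,\beta,V_w)=\frac{\tfrac12\rho A\, C_p\!\big(\tfrac{\omega_r R}{V_w},\beta\big)V_w^3}{\omega_r}-a'-C_f\omega_r .$$ Let $\omega_r^{(1)}\in(0,\infty)$ be such that $g(\omega_r^{(1)},\beta,V_w)=0$ and $g(\omega_r,\beta,V_w)>0$ for all $\omega_r\in(0,\omega_r^{(1)})$, and let $\underline{\gamma}\in(-\infty,0)$, $\overline{\gamma}\in(0,\infty)$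 be such that $\underline{\gamma}\le\frac{\partial}{\partial\omega_r}g(\omega_r,\beta,V_w)\le\overline{\gamma}$ for all $\omega_r\in(0,\infty)$. Consider the closed-loop system in the state $(\omega_r,\hat g)$: $$\dot\omega_r=\frac1J\Big(g(\omega_r,\beta,V_w)-\max\Big\{\hat g+\alpha\ln\frac{\omega_r}{\omega_{rd}},\,0\Big\}\Big),\qquad \dot{\hat g}=\frac hJ\big(g(\omega_r,\beta,V_w)-\hat g\big),$$ where $\omega_{rd}$ is a constant with $0<\omega_{rd}\le\omega_r^{(1)}$, and $\alpha,h\in\mathbb{R}$ are gains. Let $D=\{(\omega_r,\hat g):0<\omega_r\le\omega_r^{(1)},\ \hat g\in\mathbb{R}\}\subset\mathbb{R}^2$. If $\alpha>0$ and $$h>\overline{\gamma}\ \text{ if }\ \overline{\gamma}\ge-\tfrac13\underline{\gamma},\qquad h>-\frac{(\overline{\gamma}-\underline{\gamma})^2}{8(\underline{\gamma}+\overline{\gamma})}\ \text{ otherwise},$$ then: (i) the system has a unique equilibrium point in $D$, namely $(\omega_{rd},g(\omega_{rd},\beta,V_w))$; (ii) $D$ is positively invariant, i.e., if $(\omega_r(0),\hat g(0))\in D$ then $(\omega_r(t),\hat g(t))\in D$ for all $t\ge0$; and (iii) the equilibrium point $(\omega_{rd},g(\omega_{rd},\beta,V_w))$ is locally asymptotically stable with domain of attraction $D$.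
   Context: This models a wind turbine rotor: $\omega_r$ is the rotor angular velocity, $\omega_{rd}$ its desired value, $\hat g$ an estimate of the lumped uncertainty $g$, $J$ the moment of inertia, $C_f$ the friction coefficient, $\rho$ the air density, $A=\pi R^2$ the swept area of blades of radius $R$, $V_w$ the wind speed, $\beta$ the blade pitch angle, and $C_p(\lambda,\beta)$ the performance coefficient as a function of tip speed ratio $\lambda=\omega_r R/V_w$ and pitch. The constant $a'$ equals $-\frac{v_{ds}^2+v_{qs}^2}{4\omega_s R_s}$ for electrical parameters with $\omega_s,R_s>0$ and $(v_{ds},v_{qs})\neq(0,0)$, hence is negative. The paper asserts that under (A1)–(A4) a point $\omega_r^{(1)}$ and constants $\underline\gamma,\overline\gamma$ as described exist. *)

theory Defs
  imports "HOL-Analysis.Analysis"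
begin

definition C1_on2 :: "(real \<Rightarrow> real \<Rightarrow> real) \<Rightarrow> (real \<times> real) set \<Rightarrow> bool" where
  "C1_on2 Cp S \<longleftrightarrow>
     (\<exists>Dl Db :: real \<times> real \<Rightarrow> real.
        continuous_on S Dl \<and> continuous_on S Db \<and>
        (\<forall>p\<in>S. ((\<lambda>q. Cp (fst q) (snd q)) has_derivative
                   (\<lambda>u. Dl p * fst u + Db p * snd u)) (at p within S)))"

definition gfun :: "real \<Rightarrow> real \<Rightarrow> real \<Rightarrow> real \<Rightarrow> real \<Rightarrow> (real \<Rightarrow> real \<Rightarrow> real)
                    \<Rightarrow> real \<Rightarrow> real \<Rightarrow> real \<Rightarrow> real" where
  "gfun rho A R Cf a' Cp beta Vw w =
     (1/2 * rho * A * Cp (w * R / Vw) beta * Vw ^ 3) / w - a' - Cf * w"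

definition cl_field :: "real \<Rightarrow> real \<Rightarrow> real \<Rightarrow> real \<Rightarrow> (real \<Rightarrow> real)
                        \<Rightarrow> real \<times> real \<Rightarrow> real \<times> real" where
  "cl_field J alpha h wrd g p =
     (let w = fst p; gh = snd p in
      ((g w - max (gh + alpha * ln (w / wrd)) 0) / J, h / J * (g w - gh)))"

definition is_solution :: "(real \<times> real \<Rightarrow> real \<times> real) \<Rightarrow> (real \<Rightarrow> real \<times> real)
                           \<Rightarrow> real set \<Rightarrow> bool" where
  "is_solution F x S \<longleftrightarrow>
     is_interval S \<and> 0 \<in> S \<and> S \<subseteq> {0..} \<and>
     (\<forall>t\<in>S. fst (x t) > 0 \<and> (x has_vector_derivative F (x t)) (at t within S))"

end

theory Submission
  imports Defs
begin

text \<open>The function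
  \<open>V(\<omega>, g\<^sub>e) = \<alpha> (\<omega> ln (\<omega>/\<omega>\<^sub>r\<^sub>d) - \<omega> + \<omega>\<^sub>r\<^sub>d) + c/2 (g(\<omega>) - g\<^sub>e)\<^sup>2\<close>
  is a Lyapunov function on \<open>D\<close>: along trajectories its derivative is, up to the saturation, a
  quadratic form in \<open>ln (\<omega>/\<omega>\<^sub>r\<^sub>d)\<close> and \<open>g(\<omega>) - g\<^sub>e\<close> whose coefficients depend on
  \<open>g'(\<omega>) \<in> [\<gamma>\<^sub>l\<^sub>o, \<gamma>\<^sub>h\<^sub>i]\<close>, and the gain condition on \<open>h\<close> is exactly what makes this form negative
  definite for a suitable weight \<open>c > 0\<close>; the saturation only helps because \<open>g \<ge> 0\<close> on \<open>D\<close>.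
  Invariance of \<open>D\<close> and boundedness of trajectories come from comparison arguments, global
  existence from Picard iteration for the field with \<open>\<omega>\<close> clipped from below (which is globally
  Lipschitz and agrees with the true field on the trajectories), and convergence from the uniform
  decrease of \<open>V\<close> on compact parts of \<open>D\<close> away from the equilibrium.\<close>

section \<open>Picard iteration\<close>

fun picard_iterate :: "('a::banach \<Rightarrow> 'a) \<Rightarrow> 'a \<Rightarrow> nat \<Rightarrow> real \<Rightarrow> 'a" where
  "picard_iterate F p 0 = (\<lambda>t. p)"
| "picard_iterate F p (Suc n) = (\<lambda>t. p + integral {0..t} (\<lambda>s. F (picard_iterate F p n s)))"

definition picard_solution :: "('a::banach \<Rightarrow> 'a) \<Rightarrow> 'a \<Rightarrow> real \<Rightarrow> 'a" where
  "picard_solution F p t = p + (\<Sum>i. picard_iterate F p (Suc i) t - picard_iterate F p i t)"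

lemma continuous_on_picard_iterate:
  assumes "continuous_on UNIV F"
  shows "continuous_on {0..T} (picard_iterate F p n)"
proof (induction n arbitrary: T)
  case (Suc n)
  have "continuous_on {0..T} (\<lambda>s. F (picard_iterate F p n s))"
    using continuous_on_compose2[OF assms Suc.IH] by auto
  from integral_has_vector_derivative[OF this]
  have "continuous_on {0..T} (\<lambda>u. integral {0..u} (\<lambda>s. F (picard_iterate F p n s)))"
    by (meson continuous_on_eq_continuous_within has_vector_derivative_continuous)
  then show ?case by (simp add: continuous_on_add)
qed simp

lemma integrable_picard_iterate:
  assumes "continuous_on UNIV F"
  shows "(\<lambda>s. F (picard_iterate F p n s)) integrable_on {0..t}"
  by (rule integrable_continuous_real,
      rule continuous_on_compose2[OF assms continuous_on_picard_iterate[OF assms]]) auto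

lemma has_integral_power_Icc:
  fixes t :: real
  assumes "0 \<le> t"
  shows "((\<lambda>s. s ^ n) has_integral t ^ Suc n / Suc n) {0..t}"
proof -
  have "((\<lambda>s. s ^ n) has_integral t ^ Suc n / Suc n - 0 ^ Suc n / Suc n) {0..t}"
  proof (rule fundamental_theorem_of_calculus[OF assms])
    fix x :: real
    show "((\<lambda>s. s ^ Suc n / Suc n) has_vector_derivative x ^ n) (at x within {0..t})"
      using DERIV_cdivide[OF DERIV_pow[of "Suc n" x], of "Suc n"]
      by (simp add: has_field_derivative_at_within has_real_derivative_iff_has_vector_derivative
          del: of_nat_Suc)
  qed
  then show ?thesis by simp
qed

lemma picard_iterate_step_bound:
  assumes lip: "K-lipschitz_on UNIV F" and t: "0 \<le> t"
  shows "norm (picard_iterate F p (Suc n) t - picard_iterate F p n t)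
           \<le> norm (F p) * K ^ n * t ^ Suc n / fact (Suc n)"
  using t
proof (induction n arbitrary: t)
  case (Suc n)
  have K: "0 \<le> K" using lipschitz_on_nonneg[OF lip] .
  note cF = lipschitz_on_continuous_on[OF lip]
  define c where "c = norm (F p) * K ^ Suc n / fact (Suc n)"
  have hi: "((\<lambda>s. c * s ^ Suc n) has_integral c * (t ^ Suc (Suc n) / Suc (Suc n))) {0..t}"
    using has_integral_mult_right[OF has_integral_power_Icc[OF Suc.prems]] .
  have "picard_iterate F p (Suc (Suc n)) t - picard_iterate F p (Suc n) t
      = integral {0..t} (\<lambda>s. F (picard_iterate F p (Suc n) s))
        - integral {0..t} (\<lambda>s. F (picard_iterate F p n s))"
    by (simp only: picard_iterate.simps) simp
  then have "norm (picard_iterate F p (Suc (Suc n)) t - picard_iterate F p (Suc n) t)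
      = norm (integral {0..t} (\<lambda>s. F (picard_iterate F p (Suc n) s) - F (picard_iterate F p n s)))"
    by (simp only: integral_diff[OF integrable_picard_iterate[OF cF] integrable_picard_iterate[OF cF]])
  also have "\<dots> \<le> integral {0..t} (\<lambda>s. c * s ^ Suc n)"
  proof (rule integral_norm_bound_integral)
    show "(\<lambda>s. F (picard_iterate F p (Suc n) s) - F (picard_iterate F p n s)) integrable_on {0..t}"
      by (intro integrable_diff integrable_picard_iterate[OF cF])
    show "(\<lambda>s. c * s ^ Suc n) integrable_on {0..t}" using hi by blast
    fix s assume s: "s \<in> {0..t}"
    have "norm (F (picard_iterate F p (Suc n) s) - F (picard_iterate F p n s))
          \<le> K * norm (picard_iterate F p (Suc n) s - picard_iterate F p n s)"
      using lipschitz_on_normD[OF lip] by simp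
    also have "\<dots> \<le> K * (norm (F p) * K ^ n * s ^ Suc n / fact (Suc n))"
      using Suc.IH[of s] s K by (intro mult_left_mono) auto
    also have "\<dots> = c * s ^ Suc n" by (simp add: c_def)
    finally show "norm (F (picard_iterate F p (Suc n) s) - F (picard_iterate F p n s)) \<le> c * s ^ Suc n" .
  qed
  also have "\<dots> = norm (F p) * K ^ Suc n * t ^ Suc (Suc n) / fact (Suc (Suc n))"
    using integral_unique[OF hi] by (simp add: c_def)
  finally show ?case .
qed simp

lemma summable_picard_majorant:
  fixes K T :: real
  assumes "0 \<le> K" "0 \<le> T"
  shows "summable (\<lambda>i. c * K ^ i * T ^ Suc i / fact (Suc i))"
proof (rule summable_comparison_test)
  show "summable (\<lambda>i. \<bar>c\<bar> * T * (inverse (fact i) * (K * T) ^ i))"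
    by (intro summable_mult summable_exp)
  have "\<bar>c * K ^ i * T ^ Suc i / fact (Suc i)\<bar> = \<bar>c\<bar> * K ^ i * T ^ Suc i / fact (Suc i)" for i
    using assms by (simp add: abs_mult)
  also have "\<dots> i \<le> \<bar>c\<bar> * K ^ i * T ^ Suc i / fact i" for i
    using assms by (intro divide_left_mono fact_mono) auto
  also have "\<dots> i = \<bar>c\<bar> * T * (inverse (fact i) * (K * T) ^ i)" for i
    by (simp add: power_mult_distrib field_simps)
  finally show "\<exists>N. \<forall>i\<ge>N. norm (c * K ^ i * T ^ Suc i / fact (Suc i))
      \<le> \<bar>c\<bar> * T * (inverse (fact i) * (K * T) ^ i)"
    by auto
qed

lemma uniform_limit_picard_iterate:
  assumes lip: "K-lipschitz_on UNIV F" and T: "0 \<le> T"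
  shows "uniform_limit {0..T} (picard_iterate F p) (picard_solution F p) sequentially"
proof -
  let ?d = "\<lambda>i t. picard_iterate F p (Suc i) t - picard_iterate F p i t"
  have "uniform_limit {0..T} (\<lambda>n t. \<Sum>i<n. ?d i t) (\<lambda>t. \<Sum>i. ?d i t) sequentially"
  proof (rule Weierstrass_m_test)
    show "summable (\<lambda>i. norm (F p) * K ^ i * T ^ Suc i / fact (Suc i))"
      using summable_picard_majorant[OF lipschitz_on_nonneg[OF lip] T] .
    fix i t assume t: "t \<in> {0..T}"
    have "norm (?d i t) \<le> norm (F p) * K ^ i * t ^ Suc i / fact (Suc i)"
      using picard_iterate_step_bound[OF lip] t by simp
    also have "\<dots> \<le> norm (F p) * K ^ i * T ^ Suc i / fact (Suc i)"
      using t lipschitz_on_nonneg[OF lip] by (intro divide_right_mono mult_left_mono power_mono) auto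
    finally show "norm (?d i t) \<le> norm (F p) * K ^ i * T ^ Suc i / fact (Suc i)" .
  qed
  then have "uniform_limit {0..T} (\<lambda>n t. p + (\<Sum>i<n. ?d i t)) (picard_solution F p) sequentially"
    unfolding picard_solution_def[abs_def] by (intro uniform_limit_add uniform_limit_const)
  moreover have "p + (\<Sum>i<n. ?d i t) = picard_iterate F p n t" for n t
    using sum_lessThan_telescope[of "\<lambda>i. picard_iterate F p i t" n]
    by (simp del: picard_iterate.simps(2))
  ultimately show ?thesis by simp
qed

lemma continuous_on_picard_solution:
  assumes lip: "K-lipschitz_on UNIV F"
  shows "continuous_on {0..T} (picard_solution F p)"
proof (cases "0 \<le> T")
  case True
  show ?thesis
    by (rule uniform_limit_theorem[OF _ uniform_limit_picard_iterate[OF lip True]])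
      (auto intro: always_eventually continuous_on_picard_iterate lipschitz_on_continuous_on[OF lip])
qed simp

lemma picard_solution_integral_eq:
  assumes lip: "K-lipschitz_on UNIV F" and t: "0 \<le> t"
  shows "picard_solution F p t = p + integral {0..t} (\<lambda>s. F (picard_solution F p s))"
proof -
  note ul = uniform_limit_picard_iterate[OF lip t]
  have "uniform_limit {0..t} (\<lambda>n s. F (picard_iterate F p n s)) (\<lambda>s. F (picard_solution F p s)) sequentially"
    by (rule uniform_limit_compose_uniformly_continuous_on[OF ul _ _ closed_UNIV])
      (auto intro: lipschitz_on_uniformly_continuous[OF lip])
  then obtain I J where I: "\<And>n. ((\<lambda>s. F (picard_iterate F p n s)) has_integral I n) {0..t}"
    and J: "((\<lambda>s. F (picard_solution F p s)) has_integral J) {0..t}" and IJ: "I \<longlonglongrightarrow> J"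
    by (rule uniform_limit_integral)
      (auto intro: continuous_on_compose2[OF lipschitz_on_continuous_on[OF lip]]
        continuous_on_picard_iterate[OF lipschitz_on_continuous_on[OF lip]])
  have "I n = integral {0..t} (\<lambda>s. F (picard_iterate F p n s))" for n
    using integral_unique[OF I] by simp
  then have "(\<lambda>n. picard_iterate F p (Suc n) t) \<longlonglongrightarrow> p + J"
    using tendsto_add[OF tendsto_const IJ] by simp
  moreover have "(\<lambda>n. picard_iterate F p (Suc n) t) \<longlonglongrightarrow> picard_solution F p t"
    using LIMSEQ_Suc[OF tendsto_uniform_limitI[OF ul]] t by simp
  ultimately show ?thesis
    using LIMSEQ_unique J by (metis integral_unique)
qed

lemma picard_solution_solves:
  assumes lip: "K-lipschitz_on UNIV F"
  shows "picard_solution F p 0 = p"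
    and "0 \<le> t \<Longrightarrow> (picard_solution F p has_vector_derivative F (picard_solution F p t))
                     (at t within {0..})"
proof -
  show "picard_solution F p 0 = p"
    using picard_solution_integral_eq[OF lip, of 0] by simp
  assume t: "0 \<le> t"
  have "continuous_on {0..t+1} (\<lambda>s. F (picard_solution F p s))"
    by (rule continuous_on_compose2[OF lipschitz_on_continuous_on[OF lip]
          continuous_on_picard_solution[OF lip]]) auto
  from integral_has_vector_derivative[OF this] t
  have "((\<lambda>u. p + integral {0..u} (\<lambda>s. F (picard_solution F p s))) has_vector_derivative
      F (picard_solution F p t)) (at t within {0..t+1})"
    by (intro derivative_eq_intros) auto
  then have "(picard_solution F p has_vector_derivative F (picard_solution F p t)) (at t within {0..t+1})"
    by (rule has_vector_derivative_transform[rotated 2])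
      (use t picard_solution_integral_eq[OF lip] in auto)
  moreover have "at t within {0..t+1} = at t within {0..}"
    by (rule at_within_nhd[where S="{..<t+1}"]) auto
  ultimately show "(picard_solution F p has_vector_derivative F (picard_solution F p t)) (at t within {0..})"
    by simp
qed

section \<open>Comparison and one-variable calculus\<close>

lemma deriv_barrier:
  fixes f f' :: "real \<Rightarrow> real"
  assumes ab: "a \<le> b" and cont: "continuous_on {a..b} f" and fa: "f a \<le> c"
    and der: "\<And>s. a < s \<Longrightarrow> s < b \<Longrightarrow> c < f s \<Longrightarrow>
                (f has_real_derivative f' s) (at s) \<and> f' s \<le> k * (f s - c)"
  shows "f b \<le> c"
proof (rule ccontr)
  assume fb: "\<not> f b \<le> c"
  define Z where "Z = {a..b} \<inter> f -` {..c}"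
  have "closed Z"
    unfolding Z_def using continuous_closed_preimage[OF cont closed_atLeastAtMost] by simp
  moreover have "a \<in> Z" and bdd: "bdd_above Z" using ab fa by (auto simp: Z_def intro: bdd_aboveI[of _ b])
  ultimately have t0: "Sup Z \<in> Z" using closed_contains_Sup by blast
  define t0 where "t0 = Sup Z"
  have at0: "a \<le> t0" using cSup_upper[OF \<open>a \<in> Z\<close> bdd] by (simp add: t0_def)
  have t0b: "t0 \<le> b" and ft0: "f t0 \<le> c" using t0 by (auto simp: Z_def t0_def)
  have above: "c < f s" if "t0 < s" "s \<le> b" for s
    using cSup_upper[OF _ bdd, of s] that at0 by (force simp: Z_def t0_def)
  \<comment> \<open>Gronwall: while \<open>f\<close> stays above \<open>c\<close>, \<open>(f s - c) * exp (- k * s)\<close> cannot increase.\<close>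
  define \<phi> where "\<phi> s = (f s - c) * exp (- k * s)" for s
  have "\<phi> b \<le> \<phi> t0"
  proof (rule DERIV_nonpos_imp_decreasing_open[OF t0b])
    show "continuous_on {t0..b} \<phi>"
      unfolding \<phi>_def using continuous_on_subset[OF cont] at0
      by (intro continuous_intros) auto
    fix s assume s: "t0 < s" "s < b"
    from der[of s] s at0 above[of s]
    have f': "(f has_real_derivative f' s) (at s)" and le: "f' s \<le> k * (f s - c)" by auto
    have "(\<phi> has_real_derivative (f' s - k * (f s - c)) * exp (- k * s)) (at s)"
      unfolding \<phi>_def
      by (rule DERIV_cong[OF DERIV_mult[OF DERIV_diff[OF f' DERIV_const]
            DERIV_fun_exp[OF DERIV_cmult[OF DERIV_ident]]]]) (simp add: algebra_simps)
    then show "\<exists>y. (\<phi> has_real_derivative y) (at s) \<and> y \<le> 0"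
      using le by (intro exI conjI) (auto intro: mult_nonpos_nonneg)
  qed
  moreover have "\<phi> t0 \<le> 0" using ft0 by (simp add: \<phi>_def mult_nonpos_nonneg)
  moreover have "0 < \<phi> b" using fb by (simp add: \<phi>_def)
  ultimately show False by linarith
qed

lemma is_interval_Icc_subset:
  fixes S :: "real set"
  assumes "is_interval S" "a \<in> S" "b \<in> S"
  shows "{a..b} \<subseteq> S"
  using mem_is_interval_1_I[OF assms] by auto

lemma at_within_is_interval:
  fixes S :: "real set"
  assumes "is_interval S" "a \<in> S" "b \<in> S" "a < s" "s < b"
  shows "at s within S = at s"
proof (rule at_within_interior)
  have "s \<in> interior {a..b}" using assms by simp
  then show "s \<in> interior S" using interior_mono[OF is_interval_Icc_subset[OF assms(1-3)]] by blast
qed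

lemma has_vector_derivative_fst_snd:
  fixes x :: "real \<Rightarrow> 'a::real_normed_vector \<times> 'b::real_normed_vector"
  assumes "(x has_vector_derivative v) F"
  shows "((\<lambda>t. fst (x t)) has_vector_derivative fst v) F"
    and "((\<lambda>t. snd (x t)) has_vector_derivative snd v) F"
  unfolding has_vector_derivative_def fst_scaleR[symmetric] snd_scaleR[symmetric]
  by (intro has_derivative_fst has_derivative_snd assms[unfolded has_vector_derivative_def])+

lemma ln_diff_le:
  fixes a b m :: real
  assumes "0 < m" "m \<le> a" "m \<le> b"
  shows "\<bar>ln a - ln b\<bar> \<le> \<bar>a - b\<bar> / m"
proof -
  have *: "ln u - ln v \<le> (u - v) / m" if "m \<le> v" "v \<le> u" for u v
  proof -
    have "ln u - ln v = ln (u / v)" using that assms(1) by (simp add: ln_div)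
    also have "\<dots> \<le> u / v - 1" using that assms(1) by (intro ln_le_minus_one) simp
    also have "\<dots> = (u - v) / v" using that assms(1) by (simp add: field_simps)
    also have "\<dots> \<le> (u - v) / m" using that assms(1) by (intro divide_left_mono) auto
    finally show ?thesis .
  qed
  show ?thesis
  proof (cases "b \<le> a")
    case True
    then show ?thesis using *[of b a] assms by simp
  next
    case False
    then show ?thesis using *[of a b] assms by simp
  qed
qed


section \<open>The quadratic form and the gain condition\<close>

lemma quadratic_form_neg_semidef:
  fixes a c h \<gamma> z e :: real
  assumes a: "0 < a" and disc: "(1 + c * \<gamma>)^2 < 4 * c * h"
  shows "(e - a * z) * (a * z + c * \<gamma> * e) - c * h * e^2 \<le> 0"
    and "z \<noteq> 0 \<or> e \<noteq> 0 \<Longrightarrow> (e - a * z) * (a * z + c * \<gamma> * e) - c * h * e^2 < 0"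
proof -
  define Q where "Q = (e - a * z) * (a * z + c * \<gamma> * e) - c * h * e^2"
  define S where "S = (2 * a^2 * z - a * (1 - c * \<gamma>) * e)^2 + a^2 * (4 * c * h - (1 + c * \<gamma>)^2) * e^2"
  have S: "S = - 4 * a^2 * Q"
    unfolding S_def Q_def by (simp add: algebra_simps power2_eq_square)
  have "0 \<le> S" using disc unfolding S_def by (intro add_nonneg_nonneg) auto
  then show "Q \<le> 0" unfolding S using a by (simp add: mult_le_0_iff)
  assume "z \<noteq> 0 \<or> e \<noteq> 0"
  then have "0 < S"
  proof
    assume "e \<noteq> 0"
    then have "0 < a^2 * (4 * c * h - (1 + c * \<gamma>)^2) * e^2" using a disc by simp
    then show "0 < S" unfolding S_def by (simp add: add_nonneg_pos)
  next
    assume "z \<noteq> 0"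
    then show "0 < S" unfolding S_def using a disc
      by (cases "e = 0") (auto intro: add_pos_nonneg add_nonneg_pos)
  qed
  then show "Q < 0" unfolding S using a by (simp add: mult_less_0_iff)
qed

lemma saturated_form_neg_semidef:
  fixes a c h \<gamma> G z e :: real
  assumes a: "0 < a" and c: "0 < c" and disc: "(1 + c * \<gamma>)^2 < 4 * c * h"
    and G: "0 \<le> G" and Gz: "z < 0 \<Longrightarrow> 0 < G"
  shows "(G - max (G - e + a * z) 0) * (a * z + c * \<gamma> * e) - c * h * e^2 \<le> 0"
    and "z \<noteq> 0 \<or> e \<noteq> 0 \<Longrightarrow> (G - max (G - e + a * z) 0) * (a * z + c * \<gamma> * e) - c * h * e^2 < 0"
proof -
  let ?W = "(G - max (G - e + a * z) 0) * (a * z + c * \<gamma> * e) - c * h * e^2"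
  let ?Q = "(e - a * z) * (a * z + c * \<gamma> * e) - c * h * e^2"
  note Q = quadratic_form_neg_semidef[OF a disc, where z = z and e = e]
  have "0 < 4 * c * h" using disc by (smt (verit) zero_le_power2)
  then have che: "0 \<le> c * h * e^2" and che_pos: "e \<noteq> 0 \<Longrightarrow> 0 < c * h * e^2"
    using c by (simp_all add: zero_less_mult_iff)
  have "?W \<le> 0 \<and> (z \<noteq> 0 \<or> e \<noteq> 0 \<longrightarrow> ?W < 0)"
  proof (cases "0 \<le> G - e + a * z")
    case True
    then have "G - max (G - e + a * z) 0 = e - a * z" by simp
    then show ?thesis using Q by simp
  next
    case sat: False
    show ?thesis
    proof (cases "0 \<le> a * z + c * \<gamma> * e")
      case True
      have "G * (a * z + c * \<gamma> * e) \<le> (e - a * z) * (a * z + c * \<gamma> * e)"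
        using sat True by (intro mult_right_mono) auto
      then have "?W \<le> ?Q" using sat by simp
      then show ?thesis using Q by fastforce
    next
      case False
      then have GW: "G * (a * z + c * \<gamma> * e) \<le> 0" using G by (simp add: mult_nonneg_nonpos)
      have "G * (a * z + c * \<gamma> * e) < 0" if "e = 0" "z \<noteq> 0"
      proof -
        have "z < 0" using False that a by (simp add: zero_le_mult_iff)
        then show ?thesis using False that Gz by (simp add: mult_pos_neg)
      qed
      then show ?thesis using sat GW che che_pos by fastforce
    qed
  qed
  then show "?W \<le> 0" and "z \<noteq> 0 \<or> e \<noteq> 0 \<Longrightarrow> ?W < 0" by blast+
qed

lemma gain_condition_imp_weight:
  fixes glo ghi h :: real
  assumes glo: "glo < 0" and ghi: "0 < ghi"
    and hcond: "if ghi \<ge> - glo / 3 then h > ghi else h > - ((ghi - glo)^2 / (8 * (glo + ghi)))"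
  shows "\<exists>c>0. (1 + c * glo)^2 < 4 * c * h \<and> (1 + c * ghi)^2 < 4 * c * h"
proof (cases "ghi \<ge> - glo / 3")
  case True
  then have h: "ghi < h" using hcond by simp
  have "(1 + glo / ghi)^2 \<le> 2^2"
    using True glo ghi by (intro power2_le_iff_abs_le[THEN iffD2]) (auto simp: field_simps abs_le_iff)
  moreover have "4 < 4 * h / ghi" using h ghi by (simp add: field_simps)
  ultimately show ?thesis
    using ghi by (intro exI[of _ "1 / ghi"]) simp
next
  case False
  define s where "s = glo + ghi"
  have s: "s < 0" using False ghi by (simp add: s_def)
  have "- ((ghi - glo)^2 / (8 * s)) < h"
    using hcond False by (simp add: s_def)
  then have "- ((ghi - glo)^2 / (8 * s)) * (- 8 * s) < h * (- 8 * s)"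
    using s by (intro mult_strict_right_mono) auto
  then have h: "(ghi - glo)^2 < - 8 * s * h"
    using s by (simp add: field_simps)
  have "((ghi - glo) / s)^2 = (ghi - glo)^2 / s^2" by (simp add: power_divide)
  also have "\<dots> < (- 8 * s * h) / s^2" using h s by (intro divide_strict_right_mono) auto
  also have "\<dots> = 4 * (- 2 / s) * h" using s by (simp add: power2_eq_square field_simps)
  finally have "((ghi - glo) / s)^2 < 4 * (- 2 / s) * h" .
  moreover have "1 + (- 2 / s) * glo = (ghi - glo) / s" and "1 + (- 2 / s) * ghi = - ((ghi - glo) / s)"
    using s by (simp_all add: s_def field_simps)
  ultimately show ?thesis
    using s by (intro exI[of _ "- 2 / s"]) simp
qed

lemma C1_on2_differentiable_fst:
  assumes "C1_on2 Cp ({0<..} \<times> B)" "b \<in> B" "0 < l"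
  shows "(\<lambda>l. Cp l b) differentiable (at l)"
proof -
  obtain Dl Db :: "real \<times> real \<Rightarrow> real" where D: "\<And>p. p \<in> {0<..} \<times> B \<Longrightarrow>
      ((\<lambda>q. Cp (fst q) (snd q)) has_derivative (\<lambda>u. Dl p * fst u + Db p * snd u)) (at p within {0<..} \<times> B)"
    using assms(1) unfolding C1_on2_def by blast
  have "((\<lambda>l. (l, b)) has_derivative (\<lambda>u. (u, 0))) (at l within {0<..})"
    by (intro derivative_eq_intros) auto
  from has_derivative_in_compose2[OF D _ _ this] assms(2,3)
  have "((\<lambda>l. Cp l b) has_derivative (\<lambda>u. Dl (l, b) * u)) (at l within {0<..})"
    by auto
  then show ?thesis
    using assms(3) by (auto simp: differentiable_def at_within_open[of l "{0<..}"])
qed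

lemma gfun_differentiable:
  assumes "C1_on2 Cp ({0<..} \<times> B)" "beta \<in> B" "0 < R" "0 < Vw" "0 < w"
  shows "gfun rho A R Cf a' Cp beta Vw differentiable (at w)"
proof -
  have "(\<lambda>l. Cp l beta) differentiable (at (w * R / Vw))"
    using assms by (intro C1_on2_differentiable_fst) auto
  moreover have "(\<lambda>w. w * R / Vw) differentiable (at w)"
    using assms(4) by (intro derivative_intros) auto
  ultimately have "(\<lambda>w. Cp (w * R / Vw) beta) differentiable (at w)"
    using differentiable_chain_at[of "\<lambda>w. w * R / Vw" w "\<lambda>l. Cp l beta"] by (simp add: o_def)
  then show ?thesis
    unfolding gfun_def[abs_def] using assms(5)
    by (intro derivative_intros) auto
qed


section \<open>The closed loop\<close>

locale closed_loop =
  fixes g :: "real \<Rightarrow> real" and J alpha h wrd w1 glo ghi c :: real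
  assumes J: "0 < J" and alpha: "0 < alpha" and wrd: "0 < wrd" "wrd \<le> w1"
    and g_differentiable: "\<And>w. 0 < w \<Longrightarrow> g differentiable (at w)"
    and deriv_g_bounds: "\<And>w. 0 < w \<Longrightarrow> glo \<le> deriv g w \<and> deriv g w \<le> ghi"
    and g_w1: "g w1 = 0" and g_pos: "\<And>w. 0 < w \<Longrightarrow> w < w1 \<Longrightarrow> 0 < g w"
    and c: "0 < c" and disc_glo: "(1 + c * glo)^2 < 4 * c * h"
    and disc_ghi: "(1 + c * ghi)^2 < 4 * c * h"
begin

abbreviation "F \<equiv> cl_field J alpha h wrd g"
abbreviation "D \<equiv> {p :: real \<times> real. 0 < fst p \<and> fst p \<le> w1}"
abbreviation "equil \<equiv> (wrd, g wrd)"

definition "L = max (- glo) ghi"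

lemma h_pos: "0 < h"
  using disc_ghi c by (smt (verit) zero_le_power2 zero_less_mult_iff)

lemma w1_pos: "0 < w1"
  using wrd by simp

lemma g_has_deriv: "0 < w \<Longrightarrow> (g has_real_derivative deriv g w) (at w)"
  using g_differentiable DERIV_deriv_iff_real_differentiable by blast

lemma continuous_on_g: "continuous_on {0<..} g"
  by (intro continuous_at_imp_continuous_on ballI DERIV_isCont[OF g_has_deriv]) auto

lemma g_mvt:
  assumes "0 < v" "v < w"
  obtains z where "v < z" "z < w" "g w - g v = (w - v) * deriv g z"
  using MVT2[OF assms(2) g_has_deriv] assms by force

lemma L_nonneg: "0 \<le> L"
  using deriv_g_bounds[OF w1_pos] by (auto simp: L_def)

lemma g_lipschitz:
  assumes "0 < v" "0 < w"
  shows "\<bar>g w - g v\<bar> \<le> L * \<bar>w - v\<bar>"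
proof -
  have *: "\<bar>g b - g a\<bar> \<le> L * \<bar>b - a\<bar>" if ab: "0 < a" "a < b" for a b
  proof -
    obtain z where z: "a < z" "z < b" "g b - g a = (b - a) * deriv g z"
      using g_mvt[OF ab] .
    have "\<bar>deriv g z\<bar> \<le> L" using deriv_g_bounds[of z] z ab by (auto simp: L_def)
    then show ?thesis using z(3) ab by (simp add: abs_mult mult.commute mult_left_mono)
  qed
  show ?thesis
    using *[of v w] *[of w v] assms by (cases v w rule: linorder_cases) (auto simp: abs_minus_commute)
qed

lemma g_le_beyond_w1:
  assumes "w1 \<le> w"
  shows "g w \<le> ghi * (w - w1)"
proof (cases "w = w1")
  case False
  then obtain z where z: "w1 < z" "z < w" "g w - g w1 = (w - w1) * deriv g z"
    using g_mvt[OF w1_pos] assms by (metis order_le_less)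
  then have "(w - w1) * deriv g z \<le> (w - w1) * ghi"
    using deriv_g_bounds[of z] w1_pos by (intro mult_left_mono) auto
  then show ?thesis using z(3) g_w1 by (simp add: mult.commute)
qed (simp add: g_w1)

lemma g_nonneg: "0 < w \<Longrightarrow> w \<le> w1 \<Longrightarrow> 0 \<le> g w"
  using g_pos[of w] g_w1 by (cases "w = w1") auto

lemma g_le_L_w1:
  assumes "0 < w" "w \<le> w1"
  shows "g w \<le> L * w1"
proof -
  have "\<bar>g w1 - g w\<bar> \<le> L * \<bar>w1 - w\<bar>" using g_lipschitz[OF assms(1) w1_pos] .
  also have "\<dots> \<le> L * w1" using assms L_nonneg by (intro mult_left_mono) auto
  finally show ?thesis using g_w1 by simp
qed

lemma F_fst: "fst (F p) = (g (fst p) - max (snd p + alpha * ln (fst p / wrd)) 0) / J"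
  and F_snd: "snd (F p) = h / J * (g (fst p) - snd p)"
  by (simp_all add: cl_field_def Let_def)

text \<open>Solutions of the field with \<open>\<omega>\<^sub>r\<close> clipped from below at level \<open>m\<close>; for \<open>m > 0\<close> the
  clipped field is globally Lipschitz, and for \<open>m = 0\<close> these are just the solutions of \<open>F\<close>.\<close>

definition "clipped_field m p = F (max (fst p) m, snd p)"

definition "clipped_solution m x S \<longleftrightarrow> is_interval S \<and> 0 \<in> S \<and> S \<subseteq> {0..} \<and>
   (\<forall>t\<in>S. 0 < max (fst (x t)) m \<and> (x has_vector_derivative clipped_field m (x t)) (at t within S))"

lemma clipped_field_fst:
  "fst (clipped_field m p) = (g (max (fst p) m) - max (snd p + alpha * ln (max (fst p) m / wrd)) 0) / J"
  and clipped_field_snd: "snd (clipped_field m p) = h / J * (g (max (fst p) m) - snd p)"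
  by (simp_all add: clipped_field_def F_fst F_snd)

lemma clipped_solution_of_solution: "is_solution F x S \<Longrightarrow> clipped_solution 0 x S"
  unfolding is_solution_def clipped_solution_def clipped_field_def by auto

lemma clipped_solutionD:
  assumes "clipped_solution m x S" "t \<in> S"
  shows "{0..t} \<subseteq> S" "0 \<le> t" "continuous_on {0..t} x"
    "continuous_on {0..t} (\<lambda>s. fst (x s))" "continuous_on {0..t} (\<lambda>s. snd (x s))"
    "0 < s \<Longrightarrow> s < t \<Longrightarrow> ((\<lambda>s. fst (x s)) has_real_derivative fst (clipped_field m (x s))) (at s)"
    "0 < s \<Longrightarrow> s < t \<Longrightarrow> ((\<lambda>s. snd (x s)) has_real_derivative snd (clipped_field m (x s))) (at s)"
proof -
  have iv: "is_interval S" and S: "0 \<in> S" "S \<subseteq> {0..}"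
    and d: "\<And>t. t \<in> S \<Longrightarrow> (x has_vector_derivative clipped_field m (x t)) (at t within S)"
    using assms(1) by (auto simp: clipped_solution_def)
  show sub: "{0..t} \<subseteq> S" by (rule is_interval_Icc_subset[OF iv S(1) assms(2)])
  show "0 \<le> t" using S assms(2) by auto
  have "continuous_on S x"
    unfolding continuous_on_eq_continuous_within using d has_vector_derivative_continuous by blast
  then show cx: "continuous_on {0..t} x" using sub by (rule continuous_on_subset)
  then show "continuous_on {0..t} (\<lambda>s. fst (x s))" "continuous_on {0..t} (\<lambda>s. snd (x s))"
    by (auto intro: continuous_on_fst continuous_on_snd)
  assume s: "0 < s" "s < t"
  with sub have "s \<in> S" by auto
  from d[OF this] have "(x has_vector_derivative clipped_field m (x s)) (at s)"
    unfolding at_within_is_interval[OF iv S(1) assms(2) s] .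
  from has_vector_derivative_fst_snd[OF this]
  show "((\<lambda>s. fst (x s)) has_real_derivative fst (clipped_field m (x s))) (at s)"
    and "((\<lambda>s. snd (x s)) has_real_derivative snd (clipped_field m (x s))) (at s)"
    by (simp_all add: has_real_derivative_iff_has_vector_derivative)
qed

lemma clipped_solution_fst_le:
  assumes sol: "clipped_solution m x S" and m: "m \<le> w1" and x0: "fst (x 0) \<le> w1" and t: "t \<in> S"
  shows "fst (x t) \<le> w1"
proof (rule deriv_barrier[where a = 0 and f = "\<lambda>s. fst (x s)"
      and f' = "\<lambda>s. fst (clipped_field m (x s))" and k = "ghi / J"])
  show "0 \<le> t" "continuous_on {0..t} (\<lambda>s. fst (x s))" using clipped_solutionD[OF sol t] by auto
  fix s assume s: "0 < s" "s < t" "w1 < fst (x s)"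
  have "fst (clipped_field m (x s)) \<le> g (fst (x s)) / J"
    unfolding clipped_field_fst using s m J by (simp add: divide_right_mono)
  also have "\<dots> \<le> ghi / J * (fst (x s) - w1)"
    using g_le_beyond_w1[of "fst (x s)"] s J by (simp add: divide_right_mono)
  finally show "((\<lambda>s. fst (x s)) has_real_derivative fst (clipped_field m (x s))) (at s) \<and>
      fst (clipped_field m (x s)) \<le> ghi / J * (fst (x s) - w1)"
    using clipped_solutionD(6)[OF sol t s(1,2)] by simp
qed (rule x0)

lemma clipped_solution_snd_le:
  assumes sol: "clipped_solution m x S" and m: "m \<le> w1" and x0: "fst (x 0) \<le> w1"
    and M: "L * w1 \<le> M" "snd (x 0) \<le> M" and t: "t \<in> S"
  shows "snd (x t) \<le> M"
proof (rule deriv_barrier[where a = 0 and f = "\<lambda>s. snd (x s)"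
      and f' = "\<lambda>s. snd (clipped_field m (x s))" and k = 0])
  show "0 \<le> t" "continuous_on {0..t} (\<lambda>s. snd (x s))" using clipped_solutionD[OF sol t] by auto
  fix s assume s: "0 < s" "s < t" "M < snd (x s)"
  have sS: "s \<in> S" using clipped_solutionD(1)[OF sol t] s by auto
  have "0 < max (fst (x s)) m" using sol sS by (simp add: clipped_solution_def)
  then have "g (max (fst (x s)) m) \<le> L * w1"
    using g_le_L_w1 clipped_solution_fst_le[OF sol m x0 sS] m by simp
  then have "h * (g (max (fst (x s)) m) - snd (x s)) / J \<le> 0"
    using s M h_pos J by (intro divide_nonpos_pos mult_nonneg_nonpos) auto
  then show "((\<lambda>s. snd (x s)) has_real_derivative snd (clipped_field m (x s))) (at s) \<and>
      snd (clipped_field m (x s)) \<le> 0 * (snd (x s) - M)"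
    using clipped_solutionD(7)[OF sol t s(1,2)] s M h_pos J
    by (simp add: clipped_field_snd mult_nonneg_nonpos)
qed (rule M(2))

lemma clipped_solution_snd_ge:
  assumes sol: "clipped_solution m x S" and m: "m \<le> w1" and x0: "fst (x 0) \<le> w1"
    and M: "M \<le> 0" "M \<le> snd (x 0)" and t: "t \<in> S"
  shows "M \<le> snd (x t)"
proof -
  have "- snd (x t) \<le> - M"
  proof (rule deriv_barrier[where a = 0 and f = "\<lambda>s. - snd (x s)"
      and f' = "\<lambda>s. - snd (clipped_field m (x s))" and k = 0])
    show "0 \<le> t" "continuous_on {0..t} (\<lambda>s. - snd (x s))"
      using clipped_solutionD[OF sol t] by (auto intro: continuous_on_minus)
    fix s assume s: "0 < s" "s < t" "- M < - snd (x s)"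
    have sS: "s \<in> S" using clipped_solutionD(1)[OF sol t] s by auto
    have "0 < max (fst (x s)) m" using sol sS by (simp add: clipped_solution_def)
    then have "0 \<le> g (max (fst (x s)) m)"
      using g_nonneg clipped_solution_fst_le[OF sol m x0 sS] m by simp
    then show "((\<lambda>s. - snd (x s)) has_real_derivative - snd (clipped_field m (x s))) (at s) \<and>
        - snd (clipped_field m (x s)) \<le> 0 * (- snd (x s) - - M)"
      using DERIV_minus[OF clipped_solutionD(7)[OF sol t s(1,2)]] s M h_pos J
      by (simp add: clipped_field_snd)
  qed (use M in simp)
  then show ?thesis by simp
qed

text \<open>Once \<open>\<omega>\<^sub>r\<close> drops below \<open>\<omega>\<^sub>r\<^sub>d exp (- M / \<alpha>)\<close>, the saturation \<open>max \<dots> 0\<close> vanishes and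
  \<open>\<omega>\<^sub>r\<close> is driven by \<open>g \<ge> 0\<close> alone, so it cannot decrease further.\<close>

lemma clipped_solution_fst_ge:
  assumes sol: "clipped_solution m x S" and m: "m < l" and x0: "fst (x 0) \<le> w1"
    and M: "\<And>s. s \<in> S \<Longrightarrow> snd (x s) \<le> M"
    and l: "0 < l" "l \<le> fst (x 0)" "l \<le> wrd * exp (- M / alpha)" and t: "t \<in> S"
  shows "l \<le> fst (x t)"
proof -
  have "- fst (x t) \<le> - l"
  proof (rule deriv_barrier[where a = 0 and f = "\<lambda>s. - fst (x s)"
      and f' = "\<lambda>s. - fst (clipped_field m (x s))" and k = 0])
    show "0 \<le> t" "continuous_on {0..t} (\<lambda>s. - fst (x s))"
      using clipped_solutionD[OF sol t] by (auto intro: continuous_on_minus)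
    fix s assume s: "0 < s" "s < t" "- l < - fst (x s)"
    have sS: "s \<in> S" using clipped_solutionD(1)[OF sol t] s by auto
    define v where "v = max (fst (x s)) m"
    have v: "0 < v" "v < l" using sol sS s m by (auto simp: v_def clipped_solution_def)
    have "ln (v / wrd) < ln (exp (- M / alpha))"
      using v l wrd by (subst ln_less_cancel_iff) (auto simp: field_simps)
    then have "snd (x s) + alpha * ln (v / wrd) < 0"
      using M[OF sS] alpha by (simp add: field_simps)
    then have "fst (clipped_field m (x s)) = g v / J"
      by (simp add: clipped_field_fst v_def)
    moreover have "0 \<le> g v" using g_nonneg v l x0 by simp
    ultimately show "((\<lambda>s. - fst (x s)) has_real_derivative - fst (clipped_field m (x s))) (at s) \<and>
        - fst (clipped_field m (x s)) \<le> 0 * (- fst (x s) - - l)"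
      using DERIV_minus[OF clipped_solutionD(6)[OF sol t s(1,2)]] J by simp
  qed (use l in simp)
  then show ?thesis by simp
qed

definition "potential w = alpha * (w * (ln w - ln wrd) - w + wrd)"

definition "lyap p = potential (fst p) + c / 2 * (g (fst p) - snd p)^2"

text \<open>The derivative of \<open>lyap\<close> along a trajectory through \<open>p\<close> when \<open>deriv g (fst p) = \<gamma>\<close>.
  It is affine in \<open>\<gamma>\<close>, so \<open>lyap_rate_bound\<close> dominates it for all \<open>\<gamma> \<in> {glo..ghi}\<close>
  while, unlike \<open>deriv g\<close>, being continuous.\<close>

definition "lyap_rate \<gamma> p =
  ((g (fst p) - max (snd p + alpha * ln (fst p / wrd)) 0) *
   (alpha * ln (fst p / wrd) + c * \<gamma> * (g (fst p) - snd p)) - c * h * (g (fst p) - snd p)^2) / J"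

definition "lyap_rate_bound p = max (lyap_rate glo p) (lyap_rate ghi p)"

lemma potential_has_deriv: "0 < w \<Longrightarrow> (potential has_real_derivative alpha * ln (w / wrd)) (at w)"
  unfolding potential_def[abs_def] using wrd
  by (auto intro!: derivative_eq_intros simp: ln_div field_simps)

lemma potential_nonneg:
  assumes w: "0 < w"
  shows "0 \<le> potential w" and "w \<noteq> wrd \<Longrightarrow> 0 < potential w"
proof -
  define y where "y = wrd / w"
  have y: "0 < y" using w wrd by (simp add: y_def)
  have pot: "potential w = alpha * w * ((y - 1) - ln y)"
    using w wrd by (simp add: potential_def y_def ln_div field_simps)
  have "ln y \<le> y - 1" using ln_le_minus_one[OF y] .
  then show "0 \<le> potential w" unfolding pot using w alpha by simp
  assume "w \<noteq> wrd"
  then have "ln y < y - 1"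
    using ln_le_minus_one[OF y] ln_eq_minus_one[OF y] w by (force simp: y_def)
  then show "0 < potential w" unfolding pot using w alpha by simp
qed

lemma lyap_nonneg: "0 < fst p \<Longrightarrow> 0 \<le> lyap p"
  unfolding lyap_def using potential_nonneg(1)[of "fst p"] c by simp

lemma lyap_pos:
  assumes "0 < fst p" "p \<noteq> equil"
  shows "0 < lyap p"
proof (cases "fst p = wrd")
  case True
  then have "snd p \<noteq> g wrd" using assms(2) by (cases p) auto
  then show ?thesis
    unfolding lyap_def using potential_nonneg(1)[OF assms(1)] c True by (simp add: add_nonneg_pos)
next
  case False
  then show ?thesis
    unfolding lyap_def using potential_nonneg(2)[OF assms(1)] c by (simp add: add_pos_nonneg)
qed

lemma lyap_equil: "lyap equil = 0"
  by (simp add: lyap_def potential_def)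

lemma continuous_on_lyap: "continuous_on {p. 0 < fst p} lyap"
  and continuous_on_lyap_rate_bound: "continuous_on {p. 0 < fst p} lyap_rate_bound"
proof -
  have "continuous_on {p :: real \<times> real. 0 < fst p} (\<lambda>p. g (fst p))"
    by (rule continuous_on_compose2[OF continuous_on_g continuous_on_fst[OF continuous_on_id]]) auto
  then show "continuous_on {p. 0 < fst p} lyap" "continuous_on {p. 0 < fst p} lyap_rate_bound"
    unfolding lyap_def[abs_def] potential_def lyap_rate_bound_def lyap_rate_def using wrd J
    by (auto intro!: continuous_intros)
qed

lemma lyap_rate_le_bound:
  assumes "glo \<le> \<gamma>" "\<gamma> \<le> ghi"
  shows "lyap_rate \<gamma> p \<le> lyap_rate_bound p"
proof -
  define u where "u = g (fst p) - max (snd p + alpha * ln (fst p / wrd)) 0"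
  define e where "e = g (fst p) - snd p"
  have affine: "lyap_rate \<gamma>' p = (u * (alpha * ln (fst p / wrd)) - c * h * e^2) / J + \<gamma>' * (u * c * e / J)"
    for \<gamma>'
    unfolding lyap_rate_def u_def[symmetric] e_def[symmetric] using J by (simp add: field_simps)
  show ?thesis
  proof (cases "0 \<le> u * c * e / J")
    case True
    then have "\<gamma> * (u * c * e / J) \<le> ghi * (u * c * e / J)" using assms by (intro mult_right_mono)
    then show ?thesis unfolding lyap_rate_bound_def affine by simp
  next
    case False
    then have "\<gamma> * (u * c * e / J) \<le> glo * (u * c * e / J)" using assms by (intro mult_right_mono_neg) auto
    then show ?thesis unfolding lyap_rate_bound_def affine by simp
  qed
qed

lemma lyap_rate_bound_neg:
  assumes p: "p \<in> D"
  shows "lyap_rate_bound p \<le> 0" and "p \<noteq> equil \<Longrightarrow> lyap_rate_bound p < 0"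
proof -
  define G where "G = g (fst p)"
  define z where "z = ln (fst p / wrd)"
  define e where "e = g (fst p) - snd p"
  have w: "0 < fst p" "fst p \<le> w1" using p by auto
  have G: "0 \<le> G" using g_nonneg[OF w] by (simp add: G_def)
  have Gz: "0 < G" if "z < 0"
    using that g_pos[of "fst p"] w wrd by (simp add: G_def z_def ln_div)
  have rate: "lyap_rate \<gamma> p = ((G - max (G - e + alpha * z) 0) * (alpha * z + c * \<gamma> * e) - c * h * e^2) / J"
    for \<gamma> by (simp add: lyap_rate_def G_def z_def e_def)
  note glo = saturated_form_neg_semidef[OF alpha c disc_glo G Gz, where e = e]
  note ghi = saturated_form_neg_semidef[OF alpha c disc_ghi G Gz, where e = e]
  show "lyap_rate_bound p \<le> 0"
    using glo(1) ghi(1) J by (simp add: lyap_rate_bound_def rate divide_nonpos_pos)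
  assume "p \<noteq> equil"
  then have "z \<noteq> 0 \<or> e \<noteq> 0"
    using w wrd by (cases p) (auto simp: z_def e_def)
  then show "lyap_rate_bound p < 0"
    using glo(2) ghi(2) J by (simp add: lyap_rate_bound_def rate divide_neg_pos)
qed

lemma solution_in_D:
  assumes sol: "is_solution F x S" and x0: "x 0 \<in> D" and t: "t \<in> S"
  shows "x t \<in> D"
  using clipped_solution_fst_le[OF clipped_solution_of_solution[OF sol] _ _ t] x0 w1_pos sol t
  by (auto simp: is_solution_def)

lemma lyap_has_derivative:
  assumes sol: "is_solution F x S" and t: "t \<in> S" and s: "0 < s" "s < t"
  shows "((\<lambda>r. lyap (x r)) has_real_derivative lyap_rate (deriv g (fst (x s))) (x s)) (at s)"
proof -
  note csol = clipped_solution_of_solution[OF sol]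
  have "s \<in> S" using clipped_solutionD(1)[OF csol t] s by auto
  then have w: "0 < fst (x s)" using sol by (simp add: is_solution_def)
  then have "clipped_field 0 (x s) = F (x s)" by (simp add: clipped_field_def)
  then have dw: "((\<lambda>r. fst (x r)) has_real_derivative fst (F (x s))) (at s)"
    and dy: "((\<lambda>r. snd (x r)) has_real_derivative snd (F (x s))) (at s)"
    using clipped_solutionD(6,7)[OF csol t s] by simp_all
  have dP: "((\<lambda>r. potential (fst (x r))) has_real_derivative
      alpha * ln (fst (x s) / wrd) * fst (F (x s))) (at s)"
    by (rule DERIV_chain2[OF potential_has_deriv[OF w] dw])
  have dg: "((\<lambda>r. g (fst (x r))) has_real_derivative deriv g (fst (x s)) * fst (F (x s))) (at s)"
    by (rule DERIV_chain2[OF g_has_deriv[OF w] dw])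
  have "((\<lambda>r. lyap (x r)) has_real_derivative alpha * ln (fst (x s) / wrd) * fst (F (x s)) +
      c / 2 * (2 * (deriv g (fst (x s)) * fst (F (x s)) - snd (F (x s))) * (g (fst (x s)) - snd (x s))))
      (at s)"
    unfolding lyap_def by (auto intro!: derivative_eq_intros dP dg dy)
  then show ?thesis
    by (rule DERIV_cong) (use J in \<open>simp add: lyap_rate_def F_fst F_snd field_simps power2_eq_square\<close>)
qed

lemma lyap_decrease:
  assumes sol: "is_solution F x S" and x0: "x 0 \<in> D" and S: "s \<in> S" "t \<in> S" "s \<le> t"
    and rate: "\<And>r. s < r \<Longrightarrow> r < t \<Longrightarrow> lyap_rate_bound (x r) \<le> - m"
  shows "lyap (x t) \<le> lyap (x s) - m * (t - s)"
proof -
  note csol = clipped_solution_of_solution[OF sol]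
  have sub: "{s..t} \<subseteq> {0..t}" using clipped_solutionD(2)[OF csol S(1)] by auto
  have "{s..t} \<subseteq> S" using clipped_solutionD(1)[OF csol S(2)] sub by auto
  then have "x ` {s..t} \<subseteq> {p. 0 < fst p}" using sol by (auto simp: is_solution_def)
  then have cont: "continuous_on {s..t} (\<lambda>r. lyap (x r) + m * r)"
    using continuous_on_compose2[OF continuous_on_lyap
        continuous_on_subset[OF clipped_solutionD(3)[OF csol S(2)] sub]]
    by (auto intro!: continuous_intros)
  have "lyap (x t) + m * t \<le> lyap (x s) + m * s"
  proof (rule DERIV_nonpos_imp_decreasing_open[OF S(3) _ cont])
    fix r assume r: "s < r" "r < t"
    then have r0: "0 < r" and rS: "r \<in> S"
      using clipped_solutionD(1,2)[OF csol S(1)] clipped_solutionD(1)[OF csol S(2)] by auto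
    have "lyap_rate (deriv g (fst (x r))) (x r) \<le> lyap_rate_bound (x r)"
      using deriv_g_bounds solution_in_D[OF sol x0 rS] by (intro lyap_rate_le_bound) auto
    then show "\<exists>y. ((\<lambda>r. lyap (x r) + m * r) has_real_derivative y) (at r) \<and> y \<le> 0"
      using lyap_has_derivative[OF sol S(2) r0 r(2)] rate[OF r]
      by (intro exI conjI) (auto intro!: derivative_eq_intros)
  qed
  then show ?thesis by (simp add: algebra_simps)
qed

lemma lyap_antimono:
  assumes sol: "is_solution F x S" and x0: "x 0 \<in> D" and S: "s \<in> S" "t \<in> S" "s \<le> t"
  shows "lyap (x t) \<le> lyap (x s)"
proof -
  have "r \<in> S" if "s < r" "r < t" for r
    using that S is_interval_Icc_subset[of S s t] sol by (auto simp: is_solution_def)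
  then show ?thesis
    using lyap_decrease[OF sol x0 S, of 0] lyap_rate_bound_neg(1)[OF solution_in_D[OF sol x0]] by simp
qed

lemma lyapunov_stable:
  assumes e: "0 < \<epsilon>"
  obtains \<delta> where "0 < \<delta>" and "\<And>x S t0 t. is_solution F x S \<Longrightarrow> x 0 \<in> D \<Longrightarrow> t0 \<in> S \<Longrightarrow>
    dist (x t0) equil < \<delta> \<Longrightarrow> t \<in> S \<Longrightarrow> t0 \<le> t \<Longrightarrow> dist (x t) equil < \<epsilon>"
proof -
  define r where "r = min \<epsilon> (wrd / 2)"
  have r: "0 < r" "r \<le> \<epsilon>" "r \<le> wrd / 2" using e wrd by (auto simp: r_def)
  define K where "K = {q :: real \<times> real. dist q equil = r \<and> fst q \<le> w1}"
  have "compact K"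
    unfolding K_def compact_eq_bounded_closed
    by (auto intro!: closed_Collect_conj closed_Collect_eq closed_Collect_le continuous_intros
        intro: bounded_subset[OF bounded_cball[of equil r]] simp: dist_commute)
  have K_pos: "0 < fst q" if "q \<in> K" for q
    using dist_fst_le[of q equil] that r wrd by (auto simp: K_def dist_real_def)
  have "(wrd, g wrd + r) \<in> K" using r wrd by (simp add: K_def dist_norm)
  moreover have "continuous_on K lyap"
    by (rule continuous_on_subset[OF continuous_on_lyap]) (use K_pos in auto)
  ultimately obtain q1 where q1: "q1 \<in> K" and min: "\<And>q. q \<in> K \<Longrightarrow> lyap q1 \<le> lyap q"
    using continuous_attains_inf[OF \<open>compact K\<close>] by blast
  have "0 < lyap q1" using lyap_pos[OF K_pos[OF q1]] q1 r by (auto simp: K_def)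
  moreover have "open {p :: real \<times> real. 0 < fst p}"
    by (intro open_Collect_less continuous_intros)
  then have "isCont lyap equil"
    using continuous_on_lyap wrd by (simp add: continuous_on_eq_continuous_at)
  ultimately obtain \<delta>0 where \<delta>0: "0 < \<delta>0" "\<And>q. dist q equil < \<delta>0 \<Longrightarrow> lyap q < lyap q1"
    unfolding continuous_at_eps_delta using lyap_equil by (force simp: dist_real_def)
  show ?thesis
  proof (rule that[of "min \<delta>0 r"])
    show "0 < min \<delta>0 r" using \<delta>0 r by simp
    fix x S t0 t
    assume sol: "is_solution F x S" and x0: "x 0 \<in> D" and t0: "t0 \<in> S" "dist (x t0) equil < min \<delta>0 r"
      and t: "t \<in> S" "t0 \<le> t"
    show "dist (x t) equil < \<epsilon>"
    proof (rule ccontr)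
      assume "\<not> dist (x t) equil < \<epsilon>"
      then have "dist (x t0) equil \<le> r" "r \<le> dist (x t) equil" using t0 r by auto
      moreover have sub: "{t0..t} \<subseteq> S" using sol t0 t by (auto simp: is_solution_def is_interval_Icc_subset)
      moreover have "continuous_on {t0..t} (\<lambda>s. dist (x s) equil)"
        using clipped_solutionD(2)[OF clipped_solution_of_solution[OF sol] t0(1)]
        by (intro continuous_intros continuous_on_subset[OF clipped_solutionD(3)[OF
              clipped_solution_of_solution[OF sol] t(1)]]) auto
      ultimately obtain s where s: "t0 \<le> s" "s \<le> t" "dist (x s) equil = r"
        using IVT'[of "\<lambda>s. dist (x s) equil"] t(2) by blast
      then have sS: "s \<in> S" using sub by auto
      then have "x s \<in> K" using s solution_in_D[OF sol x0] by (simp add: K_def)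
      then have "lyap q1 \<le> lyap (x t0)"
        using min lyap_antimono[OF sol x0 t0(1) sS s(1)] by (meson order_trans)
      then show False using \<delta>0(2) t0(2) by fastforce
    qed
  qed
qed

definition "trap_ceiling p = max (snd p) (L * w1)"

definition "trap_floor p = min (fst p) (wrd * exp (- trap_ceiling p / alpha))"

definition "trap_box p = {q. trap_floor p \<le> fst q \<and> fst q \<le> w1 \<and>
                            min (snd p) 0 \<le> snd q \<and> snd q \<le> trap_ceiling p}"

lemma trap_floor_pos: "p \<in> D \<Longrightarrow> 0 < trap_floor p"
  using wrd by (simp add: trap_floor_def)

lemma compact_trap_box: "compact (trap_box p)"
proof -
  have "trap_box p \<subseteq> cbox (trap_floor p, min (snd p) 0) (w1, trap_ceiling p)"
    by (auto simp: trap_box_def cbox_Pair_eq)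
  then have "bounded (trap_box p)" by (rule bounded_subset[OF bounded_cbox])
  moreover have "closed (trap_box p)"
    unfolding trap_box_def by (intro closed_Collect_conj closed_Collect_le continuous_intros)
  ultimately show ?thesis by (simp add: compact_eq_bounded_closed)
qed

lemma trap_box_subset_D: "p \<in> D \<Longrightarrow> trap_box p \<subseteq> D"
  using trap_floor_pos[of p] by (auto simp: trap_box_def)

lemma clipped_solution_in_trap_box:
  assumes sol: "clipped_solution m x S" and x0: "x 0 \<in> D" and m: "m < trap_floor (x 0)"
    and t: "t \<in> S"
  shows "x t \<in> trap_box (x 0)"
proof -
  have mw1: "m \<le> w1" using m x0 by (simp add: trap_floor_def)
  have up: "snd (x s) \<le> trap_ceiling (x 0)" if "s \<in> S" for s
    using clipped_solution_snd_le[OF sol mw1 _ _ _ that] x0 by (simp add: trap_ceiling_def)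
  show ?thesis
    unfolding trap_box_def using x0 trap_floor_pos[OF x0] up[OF t]
      clipped_solution_fst_le[OF sol mw1 _ t] clipped_solution_snd_ge[OF sol mw1 _ _ _ t]
      clipped_solution_fst_ge[OF sol m _ up _ _ _ t]
    by (simp add: trap_floor_def)
qed

lemma solution_tendsto_equil:
  assumes sol: "is_solution F x {0..}" and x0: "x 0 \<in> D"
  shows "(x \<longlongrightarrow> equil) at_top"
proof (rule tendstoI)
  fix \<epsilon> :: real assume e: "0 < \<epsilon>"
  obtain \<delta> where \<delta>: "0 < \<delta>" and stable: "\<And>x S t0 t. is_solution F x S \<Longrightarrow> x 0 \<in> D \<Longrightarrow>
      t0 \<in> S \<Longrightarrow> dist (x t0) equil < \<delta> \<Longrightarrow> t \<in> S \<Longrightarrow> t0 \<le> t \<Longrightarrow> dist (x t) equil < \<epsilon>"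
    by (rule lyapunov_stable[OF e]) blast
  have box: "x t \<in> trap_box (x 0)" if "0 \<le> t" for t
    using clipped_solution_in_trap_box[OF clipped_solution_of_solution[OF sol] x0] that
      trap_floor_pos[OF x0] by simp
  have "\<exists>t0\<ge>0. dist (x t0) equil < \<delta>"
  proof (rule ccontr)
    assume "\<not> ?thesis"
    then have far: "\<delta> \<le> dist (x t) equil" if "0 \<le> t" for t using that by force
    \<comment> \<open>Away from \<open>equil\<close> the trajectory stays in a compact part of \<open>D - {equil}\<close>, where
        \<open>lyap\<close> decreases at a uniform rate; this contradicts \<open>lyap \<ge> 0\<close>.\<close>
    define K where "K = trap_box (x 0) \<inter> {q. \<delta> \<le> dist q equil}"
    have "compact K"
      unfolding K_def by (intro compact_Int_closed compact_trap_box closed_Collect_le continuous_intros)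
    have KD: "q \<in> D" "q \<noteq> equil" if "q \<in> K" for q
      using that trap_box_subset_D[OF x0] \<delta> by (auto simp: K_def)
    have inK: "x t \<in> K" if "0 \<le> t" for t using box far that by (simp add: K_def)
    have "continuous_on K lyap_rate_bound"
      by (rule continuous_on_subset[OF continuous_on_lyap_rate_bound]) (use KD in auto)
    then obtain q where q: "q \<in> K" and max: "\<And>q'. q' \<in> K \<Longrightarrow> lyap_rate_bound q' \<le> lyap_rate_bound q"
      using continuous_attains_sup[OF \<open>compact K\<close>] inK[of 0] by blast
    define \<mu> where "\<mu> = - lyap_rate_bound q"
    have \<mu>: "0 < \<mu>" using lyap_rate_bound_neg(2)[OF KD[OF q]] by (simp add: \<mu>_def)
    define T where "T = lyap (x 0) / \<mu> + 1"
    have T: "0 \<le> T" using lyap_nonneg[of "x 0"] x0 \<mu> by (simp add: T_def)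
    have "lyap (x T) \<le> lyap (x 0) - \<mu> * (T - 0)"
      using max inK by (intro lyap_decrease[OF sol x0]) (use T in \<open>auto simp: \<mu>_def\<close>)
    also have "\<dots> < 0" using \<mu> by (simp add: T_def field_simps)
    finally show False using lyap_nonneg[of "x T"] KD(1)[OF inK[OF T]] by simp
  qed
  then obtain t0 where t0: "0 \<le> t0" "dist (x t0) equil < \<delta>" by blast
  have "dist (x t) equil < \<epsilon>" if "t0 \<le> t" for t
    using stable[OF sol x0, of t0 t] t0 that by simp
  then show "\<forall>\<^sub>F t in at_top. dist (x t) equil < \<epsilon>"
    unfolding eventually_at_top_linorder by blast
qed

lemma clipped_field_lipschitz:
  assumes m: "0 < m"
  shows "((L + 1 + alpha / m) / J + h / J * (L + 1))-lipschitz_on UNIV (clipped_field m)"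
proof (rule lipschitz_onI)
  show "0 \<le> (L + 1 + alpha / m) / J + h / J * (L + 1)"
    using L_nonneg alpha m J h_pos by simp
  fix p q :: "real \<times> real"
  define n where "n = dist p q"
  define a where "a = max (fst p) m"
  define b where "b = max (fst q) m"
  have ab: "m \<le> a" "m \<le> b" "0 < a" "0 < b" using m by (auto simp: a_def b_def)
  have n1: "\<bar>fst p - fst q\<bar> \<le> n" and n2: "\<bar>snd p - snd q\<bar> \<le> n"
    using dist_fst_le[of p q] dist_snd_le[of p q] by (simp_all add: n_def dist_real_def)
  then have abn: "\<bar>a - b\<bar> \<le> n" by (auto simp: a_def b_def max_def)
  have gab: "\<bar>g a - g b\<bar> \<le> L * n"
    using g_lipschitz[OF ab(4,3)] L_nonneg abn by (meson mult_left_mono order_trans)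
  have lab: "\<bar>ln a - ln b\<bar> \<le> n / m"
    using ln_diff_le[OF m ab(1,2)] m abn by (meson divide_right_mono less_imp_le order_trans)
  define X where "X = snd p + alpha * ln (a / wrd)"
  define Y where "Y = snd q + alpha * ln (b / wrd)"
  have "X - Y = (snd p - snd q) + alpha * (ln a - ln b)"
    using ab wrd by (simp add: X_def Y_def ln_div algebra_simps)
  then have "\<bar>X - Y\<bar> \<le> \<bar>snd p - snd q\<bar> + \<bar>alpha * (ln a - ln b)\<bar>"
    by (simp only: abs_triangle_ineq)
  also have "\<dots> = \<bar>snd p - snd q\<bar> + alpha * \<bar>ln a - ln b\<bar>" using alpha by (simp add: abs_mult)
  also have "\<dots> \<le> n + alpha * (n / m)" using n2 lab alpha by (intro add_mono mult_left_mono) auto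
  finally have XY: "\<bar>max X 0 - max Y 0\<bar> \<le> n + alpha / m * n" by (auto simp: max_def)
  have "fst (clipped_field m p) - fst (clipped_field m q) = ((g a - g b) - (max X 0 - max Y 0)) / J"
    by (simp add: clipped_field_fst a_def b_def X_def Y_def diff_divide_distrib)
  then have "\<bar>fst (clipped_field m p) - fst (clipped_field m q)\<bar> = \<bar>(g a - g b) - (max X 0 - max Y 0)\<bar> / J"
    using J by simp
  also have "\<dots> \<le> (L * n + (n + alpha / m * n)) / J"
    using gab XY J by (intro divide_right_mono) (auto intro: order_trans[OF abs_triangle_ineq4])
  also have "\<dots> = (L + 1 + alpha / m) / J * n" by (simp add: field_simps)
  finally have f1: "\<bar>fst (clipped_field m p) - fst (clipped_field m q)\<bar> \<le> (L + 1 + alpha / m) / J * n" .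
  have "snd (clipped_field m p) - snd (clipped_field m q) = h / J * ((g a - g b) - (snd p - snd q))"
    by (simp add: clipped_field_snd a_def b_def right_diff_distrib)
  then have "\<bar>snd (clipped_field m p) - snd (clipped_field m q)\<bar> = h / J * \<bar>(g a - g b) - (snd p - snd q)\<bar>"
    using J h_pos by (simp add: abs_mult)
  also have "\<dots> \<le> h / J * (L * n + n)"
    using gab n2 J h_pos by (intro mult_left_mono) (auto intro: order_trans[OF abs_triangle_ineq4])
  also have "\<dots> = h / J * (L + 1) * n" by (simp add: field_simps)
  finally have f2: "\<bar>snd (clipped_field m p) - snd (clipped_field m q)\<bar> \<le> h / J * (L + 1) * n" .
  have "dist (clipped_field m p) (clipped_field m q)
      = norm (fst (clipped_field m p) - fst (clipped_field m q), snd (clipped_field m p) - snd (clipped_field m q))"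
    unfolding dist_norm fst_diff[symmetric] snd_diff[symmetric] prod.collapse ..
  also have "\<dots> \<le> norm (fst (clipped_field m p) - fst (clipped_field m q))
      + norm (snd (clipped_field m p) - snd (clipped_field m q))"
    by (rule norm_Pair_le)
  also have "\<dots> \<le> (L + 1 + alpha / m) / J * n + h / J * (L + 1) * n"
    using f1 f2 by simp
  finally show "dist (clipped_field m p) (clipped_field m q)
      \<le> ((L + 1 + alpha / m) / J + h / J * (L + 1)) * dist p q"
    by (simp add: n_def distrib_right)
qed

lemma global_solution_exists:
  assumes p: "p \<in> D"
  shows "\<exists>x. is_solution F x {0..} \<and> x 0 = p"
proof -
  define m where "m = trap_floor p / 2"
  have m: "0 < m" "m < trap_floor p" using trap_floor_pos[OF p] by (auto simp: m_def)
  define x where "x = picard_solution (clipped_field m) p"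
  note lip = clipped_field_lipschitz[OF m(1)]
  have x0: "x 0 = p" using picard_solution_solves(1)[OF lip] by (simp add: x_def)
  have sol: "clipped_solution m x {0..}"
    using picard_solution_solves(2)[OF lip] m by (auto simp: clipped_solution_def x_def is_interval_1)
  have "m < fst (x t)" if "t \<in> {0..}" for t
    using clipped_solution_in_trap_box[OF sol _ _ that] p m x0 by (auto simp: trap_box_def)
  then have "is_solution F x {0..}"
    using sol m by (auto simp: is_solution_def clipped_solution_def clipped_field_def)
  with x0 show ?thesis by blast
qed

lemma equilibria_in_D: "{p \<in> D. F p = (0, 0)} = {equil}"
proof -
  have "p = equil" if p: "p \<in> D" "F p = (0, 0)" for p
  proof -
    have gh: "snd p = g (fst p)" using p(2) h_pos J by (simp add: prod_eq_iff F_snd)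
    then have sat: "g (fst p) = max (g (fst p) + alpha * ln (fst p / wrd)) 0"
      using p(2) J by (simp add: prod_eq_iff F_fst)
    \<comment> \<open>Below \<open>\<omega>\<^sub>r\<^sub>d\<close> we have \<open>g > 0\<close>, so the saturation cannot absorb a negative log term.\<close>
    have "ln (fst p / wrd) = 0"
    proof (cases "fst p < wrd")
      case True
      then have "0 < g (fst p)" using g_pos p(1) wrd by simp
      moreover have "alpha * ln (fst p / wrd) < 0"
        using True p(1) wrd alpha by (simp add: mult_pos_neg)
      ultimately have "max (g (fst p) + alpha * ln (fst p / wrd)) 0 < g (fst p)" by simp
      then show ?thesis using sat by linarith
    next
      case False
      then have "0 \<le> ln (fst p / wrd)" using wrd by simp
      moreover have "alpha * ln (fst p / wrd) \<le> 0"
        using max.cobounded1[of "g (fst p) + alpha * ln (fst p / wrd)" 0] sat by linarith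
      ultimately show ?thesis using alpha by (simp add: mult_le_0_iff)
    qed
    then have "fst p = wrd" using p(1) wrd by simp
    with gh show ?thesis by (cases p) simp
  qed
  moreover have "F equil = (0, 0)" using g_nonneg[of wrd] wrd by (simp add: prod_eq_iff F_fst F_snd)
  moreover have "equil \<in> D" using wrd by simp
  ultimately show ?thesis by blast
qed

theorem closed_loop_properties:
  "{p \<in> D. F p = (0, 0)} = {equil}
   \<and> (\<forall>x S. is_solution F x S \<and> x 0 \<in> D \<longrightarrow> (\<forall>t\<in>S. x t \<in> D))
   \<and> (\<forall>\<epsilon>>0. \<exists>\<delta>>0. \<forall>x S. is_solution F x S \<and> x 0 \<in> D \<and> dist (x 0) equil < \<delta>
          \<longrightarrow> (\<forall>t\<in>S. dist (x t) equil < \<epsilon>))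
   \<and> (\<forall>p\<in>D. \<exists>x. is_solution F x {0..} \<and> x 0 = p)
   \<and> (\<forall>x. is_solution F x {0..} \<and> x 0 \<in> D \<longrightarrow> (x \<longlongrightarrow> equil) at_top)"
proof (intro conjI allI impI ballI)
  fix \<epsilon> :: real assume "0 < \<epsilon>"
  then obtain \<delta> where "0 < \<delta>" and stable: "\<And>x S t0 t. is_solution F x S \<Longrightarrow> x 0 \<in> D \<Longrightarrow>
      t0 \<in> S \<Longrightarrow> dist (x t0) equil < \<delta> \<Longrightarrow> t \<in> S \<Longrightarrow> t0 \<le> t \<Longrightarrow> dist (x t) equil < \<epsilon>"
    by (rule lyapunov_stable) blast
  have "dist (x t) equil < \<epsilon>"
    if "is_solution F x S \<and> x 0 \<in> D \<and> dist (x 0) equil < \<delta>" "t \<in> S" for x S t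
    using that stable[of x S 0 t] by (auto simp: is_solution_def)
  with \<open>0 < \<delta>\<close> show "\<exists>\<delta>>0. \<forall>x S. is_solution F x S \<and> x 0 \<in> D \<and> dist (x 0) equil < \<delta>
      \<longrightarrow> (\<forall>t\<in>S. dist (x t) equil < \<epsilon>)"
    by blast
next
  show "{p \<in> D. F p = (0, 0)} = {equil}" by (rule equilibria_in_D)
next
  show "x t \<in> D" if "is_solution F x S \<and> x 0 \<in> D" "t \<in> S" for x S t
    using solution_in_D that by blast
next
  show "\<exists>x. is_solution F x {0..} \<and> x 0 = p" if "p \<in> D" for p
    using global_solution_exists that by blast
next
  show "(x \<longlongrightarrow> equil) at_top" if "is_solution F x {0..} \<and> x 0 \<in> D" for x
    using solution_tendsto_equil that by blast
qed

end

theorem theorem1: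
  fixes rho A R J Cf a' bmin bmax beta Vw :: real
    and Cp :: "real \<Rightarrow> real \<Rightarrow> real"
    and w1 glo ghi wrd alpha h :: real
  defines "g \<equiv> gfun rho A R Cf a' Cp beta Vw"
  defines "F \<equiv> cl_field J alpha h wrd g"
  defines "D \<equiv> {p :: real \<times> real. 0 < fst p \<and> fst p \<le> w1}"
  defines "eq \<equiv> (wrd, g wrd)"
  assumes pos: "rho > 0" "A > 0" "R > 0" "J > 0" "Cf > 0" "a' < 0"
    and beta: "beta \<in> {bmin..bmax}" and Vw: "Vw > 0"
    and A1: "C1_on2 Cp ({0<..} \<times> {bmin..bmax})"
    and A2: "\<exists>c>0. \<forall>l>0. \<forall>b\<in>{bmin..bmax}. Cp l b \<le> c * l"
    and A3: "\<forall>b\<in>{bmin..bmax}. \<exists>l1>0. \<forall>l\<in>{0<..<l1}. Cp l b > 0"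
    and A4: "\<exists>clo<0. \<exists>chi>0. \<forall>l>0. \<forall>b\<in>{bmin..bmax}.
               clo \<le> deriv (\<lambda>l'. Cp l' b / l') l \<and> deriv (\<lambda>l'. Cp l' b / l') l \<le> chi"
    and w1: "w1 > 0" "g w1 = 0" "\<forall>w\<in>{0<..<w1}. g w > 0"
    and gam: "glo < 0" "ghi > 0" "\<forall>w>0. glo \<le> deriv g w \<and> deriv g w \<le> ghi"
    and wrd: "0 < wrd" "wrd \<le> w1"
    and alpha: "alpha > 0"
    and hcond: "if ghi \<ge> - glo / 3 then h > ghi
                else h > - ((ghi - glo)^2 / (8 * (glo + ghi)))"
  shows "{p \<in> D. F p = (0, 0)} = {eq}
         \<and> (\<forall>x S. is_solution F x S \<and> x 0 \<in> D \<longrightarrow> (\<forall>t\<in>S. x t \<in> D))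
         \<and> (\<forall>\<epsilon>>0. \<exists>\<delta>>0. \<forall>x S. is_solution F x S \<and> x 0 \<in> D \<and> dist (x 0) eq < \<delta>
                \<longrightarrow> (\<forall>t\<in>S. dist (x t) eq < \<epsilon>))
         \<and> (\<forall>p\<in>D. \<exists>x. is_solution F x {0..} \<and> x 0 = p)
         \<and> (\<forall>x. is_solution F x {0..} \<and> x 0 \<in> D \<longrightarrow> (x \<longlongrightarrow> eq) at_top)"
proof -
  obtain c where c: "0 < c" "(1 + c * glo)^2 < 4 * c * h" "(1 + c * ghi)^2 < 4 * c * h"
    using gain_condition_imp_weight[OF gam(1,2) hcond] by blast
  interpret closed_loop g J alpha h wrd w1 glo ghi c
  proof
    show "g differentiable (at w)" if "0 < w" for w
      unfolding g_def using gfun_differentiable[OF A1 beta pos(3) Vw that] .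
  qed (use pos(4) wrd alpha gam(3) w1(2,3) c in auto)
  show ?thesis
    unfolding F_def D_def eq_def by (rule closed_loop_properties)
qed

end
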